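(* Let $\Sigma$ be a self-converse oriented graph on $n$ vertices such that $\det W(\Sigma)\neq 0$, and let $p$ be an odd prime. Suppose that $\mathrm{rank}_p\,W(\Sigma)=n-1$, where $\mathrm{rank}_p$ denotes rank over $\mathbb{F}_p$. Then $\ker W(\Sigma)^{\mathrm T}\subset\mathbb{F}_p^n$ is anisotropic; that is, if $v\in\mathbb{F}_p^n$, $v\neq 0$, and $W(\Sigma)^{\mathrm T}v=0$ over $\mathbb{F}_p$, then $v^{\mathrm T}v\neq 0$ in $\mathbb{F}_p$.
   Context: An oriented graph $\Sigma$ on vertex set $\{v_1,\dots,v_n\}$ is a simple graph in which every edge has been given a direction. Its skew adjacency matrix $S=S(\Sigma)=(S_{ij})$ is the $n\times n$ matrix with $S_{ij}=1$ if $(v_i,v_j)$ is a (directed) edge, $S_{ij}=-1$ if $(v_j,v_i)$ is an edge, and $S_{ij}=0$ otherwise. The walk-matrix of $\Sigma$ is $W(\Sigma)=[e,Se,\ldots,S^{n-1}e]$, where $e$ is the all-ones vector. $\Sigma$ is self-converse if there is a permutation matrix $P$ with $P^{\mathrm T}SP=S^{\mathrm T}=-S$ (equivalently, $\Sigma$ is isomorphic to the oriented graph obtained by reversing all its edges). A subspace $U\subset\mathbb{F}_p^n$ is anisotropic if $u^{\mathrm T}u\neq0$ for every nonzero $u\in U$. *)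

theory Defs
  imports "Jordan_Normal_Form.DL_Rank" "Berlekamp_Zassenhaus.Finite_Field"
begin

text \<open>An oriented graph on vertices 0..n-1 is encoded by its skew adjacency matrix S:
  an n x n integer matrix with entries in {-1,0,1} and S^T = -S
  (S i j = 1 iff (v_i,v_j) is an edge; hence zero diagonal, at most one direction per pair).\<close>
definition skew_adjacency_matrix :: "nat \<Rightarrow> int mat \<Rightarrow> bool" where
  "skew_adjacency_matrix n S \<longleftrightarrow> S \<in> carrier_mat n n \<and>
     (\<forall>i<n. \<forall>j<n. S $$ (i,j) \<in> {-1,0,1}) \<and> transpose_mat S = - S"

definition permutation_matrix :: "nat \<Rightarrow> int mat \<Rightarrow> bool" where
  "permutation_matrix n P \<longleftrightarrow> (\<exists>\<sigma>. \<sigma> permutes {..<n} \<and>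
     P = mat n n (\<lambda>(i,j). if \<sigma> j = i then 1 else 0))"

definition self_converse :: "nat \<Rightarrow> int mat \<Rightarrow> bool" where
  "self_converse n S \<longleftrightarrow> (\<exists>P. permutation_matrix n P \<and>
     transpose_mat P * S * P = transpose_mat S)"

definition walk_matrix :: "nat \<Rightarrow> int mat \<Rightarrow> int mat" where
  "walk_matrix n S = mat n n (\<lambda>(i,j). ((S ^\<^sub>m j) *\<^sub>v (vec n (\<lambda>_. 1))) $ i)"

definition mod_p_mat :: "int mat \<Rightarrow> 'p::prime_card mod_ring mat" where
  "mod_p_mat A = map_mat of_int A"

end

theory Submission
  imports Defs
begin

text \<open>
  Let W be the walk matrix and \<sigma> the permutation with P^T S P = -S. Then
  (S^k e)(\<sigma> i) = (-1)^k (S^k e)(i); since W is invertible over the integers, \<sigma> is an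
  involution, and comparing traces in P W = W diag((-1)^k) shows that it has n mod 2 fixed
  points. Over F_p the kernel of W is a line spanned by a vector u with u(n-1) \<noteq> 0
  (otherwise its shift would be a second kernel vector), supported on the indices of the
  parity of n - 1. The walk vectors of the parity of n span the (-1)^n-eigenspace of \<sigma>; with
  the shift identity W (shift y) = S W y this shows that a combination W x of walk vectors of
  a single parity that is orthogonal to all walk vectors is zero. Finally, an isotropic v
  orthogonal to all walk vectors lies in their span, v = W x, and the even and odd parts of x
  give v + v \<circ> \<sigma> = 0 and v - v \<circ> \<sigma> = 0, so 2 v = 0.
\<close>

section \<open>Linear algebra\<close>

lemma index_mult_mat_vec_sum:
  assumes "A \<in> carrier_mat n m" "v \<in> carrier_vec m" "i < n"
  shows "(A *\<^sub>v v) $ i = (\<Sum>j<m. A $$ (i,j) * v $ j)"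
  using assms by (auto simp: mult_mat_vec_def scalar_prod_def atLeast0LessThan intro!: sum.cong)

lemma index_mult_mat_sum:
  assumes "A \<in> carrier_mat n m" "B \<in> carrier_mat m l" "i < n" "j < l"
  shows "(A * B) $$ (i,j) = (\<Sum>k<m. A $$ (i,k) * B $$ (k,j))"
  using assms by (auto simp: scalar_prod_def atLeast0LessThan intro!: sum.cong)

lemma mat_kernel_trivial_imp_solvable:
  fixes M :: "'a::field mat"
  assumes M: "M \<in> carrier_mat m m"
    and inj: "\<And>s. s \<in> carrier_vec m \<Longrightarrow> M *\<^sub>v s = 0\<^sub>v m \<Longrightarrow> s = 0\<^sub>v m"
    and b: "b \<in> carrier_vec m"
  obtains s where "s \<in> carrier_vec m" "M *\<^sub>v s = b"
proof -
  have "det M \<noteq> 0" using det_0_iff_vec_prod_zero_field[OF M] inj by blast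
  then obtain B where B: "B \<in> carrier_mat m m" "M * B = 1\<^sub>m m"
    using det_non_zero_imp_unit[OF M, of "()"] unfolding Units_def ring_mat_simps by blast
  have "M *\<^sub>v (B *\<^sub>v b) = (M * B) *\<^sub>v b"
    by (rule assoc_mult_mat_vec[OF M B(1) b, symmetric])
  also have "\<dots> = b" using B(2) b by simp
  finally have "M *\<^sub>v (B *\<^sub>v b) = b" .
  with B(1) b show thesis by (intro that[of "B *\<^sub>v b"]) simp_all
qed

lemma square_system_surjective:
  fixes M :: "nat \<Rightarrow> nat \<Rightarrow> 'a::field"
  assumes fin: "finite I" "finite J" and card: "card I = card J"
    and inj: "\<And>t. \<forall>i\<in>I. (\<Sum>j\<in>J. M i j * t j) = 0 \<Longrightarrow> \<forall>j\<in>J. t j = 0"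
  shows "\<exists>t. \<forall>i\<in>I. (\<Sum>j\<in>J. M i j * t j) = b i"
proof -
  define m where "m = card J"
  obtain a where a: "bij_betw a {..<m} I"
    using ex_bij_betw_nat_finite[OF fin(1)] card unfolding m_def atLeast0LessThan by metis
  obtain c where c: "bij_betw c {..<m} J"
    using ex_bij_betw_nat_finite[OF fin(2)] unfolding m_def atLeast0LessThan by metis
  define c' where "c' = the_inv_into {..<m} c"
  have c'_c: "c' (c r) = r" if "r < m" for r
    unfolding c'_def using the_inv_into_f_f[OF bij_betw_imp_inj_on[OF c]] that by simp
  define N where "N = mat m m (\<lambda>(r, r'). M (a r) (c r'))"
  have N: "N \<in> carrier_mat m m" unfolding N_def by simp
  have N_index: "(N *\<^sub>v s) $ r = (\<Sum>j\<in>J. M (a r) j * s $ c' j)"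
    if "s \<in> carrier_vec m" "r < m" for s r
  proof -
    have "(N *\<^sub>v s) $ r = (\<Sum>r'<m. N $$ (r, r') * s $ r')"
      by (rule index_mult_mat_vec_sum[OF N that])
    also have "\<dots> = (\<Sum>r'<m. M (a r) (c r') * s $ c' (c r'))"
      unfolding N_def using that c'_c by (intro sum.cong) auto
    also have "\<dots> = (\<Sum>j\<in>J. M (a r) j * s $ c' j)"
      by (rule sum.reindex_bij_betw[OF c])
    finally show ?thesis .
  qed
  have N_inj: "s = 0\<^sub>v m" if s: "s \<in> carrier_vec m" "N *\<^sub>v s = 0\<^sub>v m" for s
  proof -
    have "\<forall>i\<in>I. (\<Sum>j\<in>J. M i j * s $ c' j) = 0"
    proof
      fix i assume "i \<in> I"
      then obtain r where "r < m" "i = a r" using a by (auto simp: bij_betw_def)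
      then show "(\<Sum>j\<in>J. M i j * s $ c' j) = 0" using N_index[OF s(1)] s(2) by simp
    qed
    then have "s $ r = 0" if "r < m" for r
      using inj[of "\<lambda>j. s $ c' j"] c'_c[OF that] bij_betwE[OF c] that by (metis lessThan_iff)
    then show ?thesis using s(1) by (intro eq_vecI) auto
  qed
  obtain s where s: "s \<in> carrier_vec m" "N *\<^sub>v s = vec m (\<lambda>r. b (a r))"
    using mat_kernel_trivial_imp_solvable[OF N N_inj vec_carrier] by blast
  have "(\<Sum>j\<in>J. M i j * s $ c' j) = b i" if "i \<in> I" for i
  proof -
    obtain r where "r < m" "i = a r" using a \<open>i \<in> I\<close> by (auto simp: bij_betw_def)
    then show ?thesis using N_index[OF s(1)] s(2) by (metis index_vec)
  qed
  then show ?thesis by (intro exI[of _ "\<lambda>j. s $ c' j"]) blast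
qed

lemma (in vec_space) maximal_indpt_columns_index:
  assumes A: "A \<in> carrier_mat n n"
    and S: "maximal S (\<lambda>T. T \<subseteq> set (cols A) \<and> lin_indpt T)"
    and card: "card S = n - 1" and n: "0 < n"
  obtains j0 f where "j0 < n" "inj_on f S" "f ` S = {..<n} - {j0}" "\<And>s. s \<in> S \<Longrightarrow> col A (f s) = s"
proof -
  have S_cols: "S \<subseteq> set (cols A)" using S unfolding maximal_def by simp
  have col_index: "\<exists>k. k < n \<and> col A k = s" if s: "s \<in> S" for s
  proof -
    obtain k where "k < length (cols A)" "cols A ! k = s"
      using S_cols s in_set_conv_nth[of s "cols A"] by blast
    then show ?thesis using A by auto
  qed
  define f where "f s = (SOME k. k < n \<and> col A k = s)" for s
  have f: "f s < n \<and> col A (f s) = s" if "s \<in> S" for s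
    unfolding f_def using someI_ex[OF col_index[OF that]] .
  have inj: "inj_on f S"
  proof (rule inj_onI)
    fix s s' assume s: "s \<in> S" "s' \<in> S" and eq: "f s = f s'"
    have "s = col A (f s)" using f[OF s(1)] by simp
    also have "\<dots> = s'" using f[OF s(2)] eq by simp
    finally show "s = s'" .
  qed
  then have card_f: "card (f ` S) = n - 1" using card by (simp add: card_image)
  have sub: "f ` S \<subseteq> {..<n}" using f by auto
  have "f ` S \<noteq> {..<n}"
  proof
    assume "f ` S = {..<n}"
    with card_f n show False by simp
  qed
  with sub obtain j0 where j0: "j0 < n" "j0 \<notin> f ` S" by blast
  have "f ` S = {..<n} - {j0}"
    using sub j0 card_f by (intro card_subset_eq) auto
  with j0(1) inj f show thesis by (intro that) auto
qed

lemma (in vec_space) indpt_columns_kernel_vanishes: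
  assumes A: "A \<in> carrier_mat n n" and fin: "finite S" and S_carrier: "S \<subseteq> carrier_vec n"
    and indpt: "lin_indpt S" and j0: "j0 < n"
    and f: "inj_on f S" "f ` S = {..<n} - {j0}" "\<And>s. s \<in> S \<Longrightarrow> col A (f s) = s"
    and y: "y \<in> carrier_vec n" "A *\<^sub>v y = 0\<^sub>v n" "y $ j0 = 0"
  shows "y = 0\<^sub>v n"
proof -
  have "lincomb (\<lambda>s. y $ f s) S = 0\<^sub>v n"
  proof (rule eq_vecI)
    fix i assume "i < dim_vec (0\<^sub>v n :: 'a vec)"
    then have i: "i < n" by simp
    have "lincomb (\<lambda>s. y $ f s) S $ i = (\<Sum>s\<in>S. y $ f s * A $$ (i, f s))"
      unfolding lincomb_index[OF i S_carrier]
    proof (intro sum.cong refl)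
      fix s assume s: "s \<in> S"
      then have "f s < n" using f(2) by auto
      then have "col A (f s) $ i = A $$ (i, f s)" using i A by simp
      then have "s $ i = A $$ (i, f s)" using f(3)[OF s] by simp
      then show "y $ f s * s $ i = y $ f s * A $$ (i, f s)" by simp
    qed
    also have "\<dots> = (\<Sum>k\<in>{..<n} - {j0}. y $ k * A $$ (i, k))"
      using sum.reindex[OF f(1), of "\<lambda>k. y $ k * A $$ (i, k)"] f(2) by simp
    also have "\<dots> = (\<Sum>k<n. y $ k * A $$ (i, k))"
      using sum.remove[of "{..<n}" j0 "\<lambda>k. y $ k * A $$ (i, k)"] j0 y(3) by simp
    also have "\<dots> = (A *\<^sub>v y) $ i"
      using index_mult_mat_vec_sum[OF A y(1) i] by (simp add: mult.commute)
    also have "\<dots> = 0" using y(2) i by simp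
    finally show "lincomb (\<lambda>s. y $ f s) S $ i = 0\<^sub>v n $ i" using i by simp
  qed (use lincomb_dim[OF fin S_carrier] in simp)
  then have coeff_zero: "y $ f s = 0" if "s \<in> S" for s
    using lin_dep_crit[OF fin subset_refl _ that, of "\<lambda>s. y $ f s"] indpt by auto
  have "y $ k = 0" if "k < n" for k
  proof (cases "k = j0")
    case False
    then have "k \<in> f ` S" using f(2) that by blast
    then show ?thesis using coeff_zero by blast
  qed (use y(3) in simp)
  then show ?thesis using y(1) by (intro eq_vecI) auto
qed

lemma (in vec_space) corank_one_kernel_coordinate:
  assumes A: "A \<in> carrier_mat n n" and rank: "rank A = n - 1" and n: "0 < n"
  obtains j0 where "j0 < n" "\<And>y. y \<in> carrier_vec n \<Longrightarrow> A *\<^sub>v y = 0\<^sub>v n \<Longrightarrow> y $ j0 = 0 \<Longrightarrow> y = 0\<^sub>v n"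
proof -
  obtain S where S: "maximal S (\<lambda>T. T \<subseteq> set (cols A) \<and> lin_indpt T)"
    using maximal_exists[of "\<lambda>T. T \<subseteq> set (cols A) \<and> lin_indpt T" "card (set (cols A))" "{}"]
    by (meson List.finite_set card_mono empty_iff empty_subsetI finite_lin_indpt2 rev_finite_subset)
  have S_cols: "S \<subseteq> set (cols A)" and indpt: "lin_indpt S" using S unfolding maximal_def by auto
  have fin: "finite S" using S_cols finite_subset by blast
  have S_carrier: "S \<subseteq> carrier_vec n" using S_cols cols_dim A by blast
  have "card S = n - 1" using rank_card_indpt[OF A S] rank by simp
  then obtain j0 f where j0: "j0 < n" and f: "inj_on f S" "f ` S = {..<n} - {j0}"
    "\<And>s. s \<in> S \<Longrightarrow> col A (f s) = s"
    using maximal_indpt_columns_index[OF A S _ n] by blast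
  show thesis
    by (rule that[OF j0 indpt_columns_kernel_vanishes[OF A fin S_carrier indpt j0 f]])
qed

section \<open>Walk vectors\<close>

lemma pow_mat_Suc_left:
  assumes "A \<in> carrier_mat n n"
  shows "A ^\<^sub>m Suc k = A * A ^\<^sub>m k"
proof (induction k)
  case (Suc k)
  have "A ^\<^sub>m Suc (Suc k) = (A * A ^\<^sub>m k) * A" using Suc by simp
  also have "\<dots> = A * A ^\<^sub>m Suc k" using assms by (simp add: assoc_mult_mat[of _ n n _ n _ n])
  finally show ?case .
qed (use assms in simp)

text \<open>Matrices and vectors indexed by {..<n} are represented as functions: walk_vec n A k is
  the column A^k e of the walk matrix, and walk_comb n A y is the product W y.\<close>
fun walk_vec :: "nat \<Rightarrow> (nat \<Rightarrow> nat \<Rightarrow> 'a::comm_ring_1) \<Rightarrow> nat \<Rightarrow> nat \<Rightarrow> 'a" where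
  "walk_vec n A 0 i = 1"
| "walk_vec n A (Suc k) i = (\<Sum>j<n. A i j * walk_vec n A k j)"

definition walk_comb :: "nat \<Rightarrow> (nat \<Rightarrow> nat \<Rightarrow> 'a::comm_ring_1) \<Rightarrow> (nat \<Rightarrow> 'a) \<Rightarrow> nat \<Rightarrow> 'a" where
  "walk_comb n A y i = (\<Sum>k<n. walk_vec n A k i * y k)"

lemma of_int_walk_vec:
  "of_int (walk_vec n A k i) = walk_vec n (\<lambda>i j. of_int (A i j)) k i"
  by (induction k arbitrary: i) simp_all

lemma walk_vec_permute:
  assumes \<sigma>: "\<sigma> permutes {..<n}"
    and anti: "\<And>i j. i < n \<Longrightarrow> j < n \<Longrightarrow> A (\<sigma> i) (\<sigma> j) = - A i j"
    and i: "i < n"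
  shows "walk_vec n A k (\<sigma> i) = (-1)^k * walk_vec n A k i"
  using i
proof (induction k arbitrary: i)
  case (Suc k)
  have "walk_vec n A (Suc k) (\<sigma> i) = (\<Sum>j<n. A (\<sigma> i) (\<sigma> j) * walk_vec n A k (\<sigma> j))"
    using sum.reindex_bij_betw[OF permutes_imp_bij[OF \<sigma>], of "\<lambda>j. A (\<sigma> i) j * walk_vec n A k j"]
    by simp
  also have "\<dots> = (\<Sum>j<n. (-1)^Suc k * (A i j * walk_vec n A k j))"
    using Suc anti by (intro sum.cong) auto
  finally show ?case by (simp add: sum_distrib_left)
qed simp

lemma walk_matrix_index:
  assumes S: "S \<in> carrier_mat n n" and "i < n" "k < n"
  shows "walk_matrix n S $$ (i,k) = walk_vec n (\<lambda>i j. S $$ (i,j)) k i"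
proof -
  have "((S ^\<^sub>m k) *\<^sub>v vec n (\<lambda>_. 1)) $ i = walk_vec n (\<lambda>i j. S $$ (i,j)) k i" if "i < n" for i
    using that
  proof (induction k arbitrary: i)
    case (Suc k)
    have "(S ^\<^sub>m Suc k) *\<^sub>v vec n (\<lambda>_. 1) = S *\<^sub>v ((S ^\<^sub>m k) *\<^sub>v vec n (\<lambda>_. 1))"
      unfolding pow_mat_Suc_left[OF S] using S by (simp add: assoc_mult_mat_vec[of _ n n _ n])
    then have "((S ^\<^sub>m Suc k) *\<^sub>v vec n (\<lambda>_. 1)) $ i
        = (\<Sum>j<n. S $$ (i,j) * ((S ^\<^sub>m k) *\<^sub>v vec n (\<lambda>_. 1)) $ j)"
      using index_mult_mat_vec_sum[OF S mult_mat_vec_carrier[OF pow_carrier_mat[OF S]] Suc.prems]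
      by (simp del: index_mult_mat_vec)
    also have "\<dots> = walk_vec n (\<lambda>i j. S $$ (i,j)) (Suc k) i"
      using Suc.IH by (simp del: index_mult_mat_vec)
    finally show ?case .
  qed (use S in simp)
  then show ?thesis using assms by (simp add: walk_matrix_def)
qed

lemma walk_matrix_carrier: "walk_matrix n S \<in> carrier_mat n n"
  by (simp add: walk_matrix_def)

section \<open>The self-converse permutation\<close>

lemma permutation_matrix_conj_index:
  assumes \<sigma>: "\<sigma> permutes {..<n}" and A: "A \<in> carrier_mat n n" and ij: "i < n" "j < n"
    and P: "P = mat n n (\<lambda>(i,j). if \<sigma> j = i then 1 else (0::'a::comm_ring_1))"
  shows "(transpose_mat P * A * P) $$ (i,j) = A $$ (\<sigma> i, \<sigma> j)"
proof -
  have \<sigma>_lt: "\<sigma> k < n" if "k < n" for k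
    using permutes_in_image[OF \<sigma>] that by simp
  have PT: "transpose_mat P \<in> carrier_mat n n" and PA: "transpose_mat P * A \<in> carrier_mat n n"
    and Pc: "P \<in> carrier_mat n n"
    using A P by auto
  have PA_index: "(transpose_mat P * A) $$ (i,b) = A $$ (\<sigma> i, b)" if "b < n" for b
  proof -
    have "(transpose_mat P * A) $$ (i,b) = (\<Sum>a<n. if a = \<sigma> i then A $$ (a,b) else 0)"
      unfolding index_mult_mat_sum[OF PT A ij(1) that] using ij P by (intro sum.cong) auto
    then show ?thesis using \<sigma>_lt[OF ij(1)] by simp
  qed
  have "(transpose_mat P * A * P) $$ (i,j) = (\<Sum>b<n. if b = \<sigma> j then A $$ (\<sigma> i, b) else 0)"
    unfolding index_mult_mat_sum[OF PA Pc ij] using ij P PA_index by (intro sum.cong) auto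
  then show ?thesis using \<sigma>_lt[OF ij(2)] by simp
qed

lemma skew_adjacency_matrix_skew:
  assumes "skew_adjacency_matrix n S" "i < n" "j < n"
  shows "S $$ (j,i) = - S $$ (i,j)"
proof -
  have "S \<in> carrier_mat n n" "transpose_mat S = - S"
    using assms(1) unfolding skew_adjacency_matrix_def by auto
  then have "transpose_mat S $$ (i,j) = (- S) $$ (i,j)" by simp
  then show ?thesis using assms(2,3) \<open>S \<in> carrier_mat n n\<close> by simp
qed

lemma self_converse_permutation:
  assumes S: "skew_adjacency_matrix n S" and "self_converse n S"
  obtains \<sigma> where "\<sigma> permutes {..<n}"
    and "\<And>i j. i < n \<Longrightarrow> j < n \<Longrightarrow> S $$ (\<sigma> i, \<sigma> j) = - S $$ (i,j)"
proof -
  obtain P \<sigma> where \<sigma>: "\<sigma> permutes {..<n}" and P: "P = mat n n (\<lambda>(i,j). if \<sigma> j = i then 1 else 0)"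
    and conj: "transpose_mat P * S * P = transpose_mat S"
    using assms(2) unfolding self_converse_def permutation_matrix_def by blast
  have Sc: "S \<in> carrier_mat n n" using S unfolding skew_adjacency_matrix_def by simp
  have "S $$ (\<sigma> i, \<sigma> j) = - S $$ (i,j)" if "i < n" "j < n" for i j
    using permutation_matrix_conj_index[OF \<sigma> Sc that P] conj skew_adjacency_matrix_skew[OF S that] that Sc
    by simp
  then show thesis using that \<sigma> by blast
qed

lemma sum_neg_one_power: "(\<Sum>k<m. (-1::int)^k) = int (m mod 2)"
  by (induction m) (auto simp: mod2_eq_if)

context
  fixes n :: nat and S :: "int mat" and \<sigma> :: "nat \<Rightarrow> nat"
  assumes S: "S \<in> carrier_mat n n"
    and \<sigma>: "\<sigma> permutes {..<n}"
    and anti: "\<And>i j. i < n \<Longrightarrow> j < n \<Longrightarrow> S $$ (\<sigma> i, \<sigma> j) = - S $$ (i,j)"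
    and det_walk: "det (walk_matrix n S) \<noteq> 0"
begin

private lemma \<sigma>_lt: "i < n \<Longrightarrow> \<sigma> i < n"
  using permutes_in_image[OF \<sigma>] by simp

private lemma walk_matrix_permute_row:
  "i < n \<Longrightarrow> k < n \<Longrightarrow> walk_matrix n S $$ (\<sigma> i, k) = (-1)^k * walk_matrix n S $$ (i,k)"
  using walk_matrix_index[OF S] walk_vec_permute[OF \<sigma>, of "\<lambda>i j. S $$ (i,j)"] anti \<sigma>_lt
  by simp

text \<open>Otherwise rows i and \<sigma> (\<sigma> i) of the walk matrix would coincide.\<close>
lemma self_converse_involution:
  assumes i: "i < n"
  shows "\<sigma> (\<sigma> i) = i"
proof (rule ccontr)
  let ?W = "walk_matrix n S"
  assume ne: "\<sigma> (\<sigma> i) \<noteq> i"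
  have "row ?W (\<sigma> (\<sigma> i)) = row ?W i"
    using i \<sigma>_lt walk_matrix_permute_row walk_matrix_carrier[of n S]
    by (intro eq_vecI) (auto simp: power_mult_distrib[symmetric])
  then have "det ?W = 0"
    using det_identical_rows[OF walk_matrix_carrier ne \<sigma>_lt[OF \<sigma>_lt[OF i]] i] by simp
  with det_walk show False by simp
qed

text \<open>With P the permutation matrix of \<sigma> and D = diag((-1)^k) we have P W = W D,
  so P and D have the same trace; multiplying by adj W keeps everything integral.\<close>
lemma self_converse_card_fixpoints: "card {i. i < n \<and> \<sigma> i = i} = n mod 2"
proof -
  let ?W = "walk_matrix n S"
  let ?A = "adj_mat ?W"
  have W: "?W \<in> carrier_mat n n" by (rule walk_matrix_carrier)
  have A: "?A \<in> carrier_mat n n" using adj_mat[OF W] by simp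
  define T where "T = (\<Sum>i<n. \<Sum>k<n. ?W $$ (\<sigma> i, k) * ?A $$ (k, i))"
  have "T = (\<Sum>i<n. (?W * ?A) $$ (\<sigma> i, i))"
    unfolding T_def using index_mult_mat_sum[OF W A] \<sigma>_lt by simp
  also have "\<dots> = (\<Sum>i<n. if \<sigma> i = i then det ?W else 0)"
    using adj_mat(2)[OF W] \<sigma>_lt by (intro sum.cong) auto
  finally have "T = det ?W * int (card {i. i < n \<and> \<sigma> i = i})"
    by (simp add: sum.If_cases lessThan_def Collect_conj_eq)
  moreover
  have "T = (\<Sum>k<n. \<Sum>i<n. (-1)^k * (?A $$ (k, i) * ?W $$ (i, k)))"
    unfolding T_def using walk_matrix_permute_row by (subst sum.swap) (auto intro!: sum.cong)
  also have "\<dots> = (\<Sum>k<n. (-1)^k * (?A * ?W) $$ (k, k))"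
    using index_mult_mat_sum[OF A W] by (simp add: sum_distrib_left)
  also have "\<dots> = det ?W * int (n mod 2)"
    using adj_mat(3)[OF W] by (simp add: sum_distrib_left[symmetric] sum_neg_one_power mult.commute)
  ultimately show ?thesis using det_walk by simp
qed

end

section \<open>Walk matrices of corank one\<close>

lemma minus_one_power_same_parity:
  "k mod 2 = p mod 2 \<Longrightarrow> (-1::'a::ring_1) ^ k = (-1) ^ p"
  by (simp add: minus_one_power_iff mod2_eq_if split: if_splits)

lemma minus_one_power_other_parity:
  "k mod 2 \<noteq> p mod 2 \<Longrightarrow> (-1::'a::ring_1) ^ k = - ((-1) ^ p)"
  by (simp add: minus_one_power_iff mod2_eq_if split: if_splits)

lemma card_same_parity_below: "card {k. k < n \<and> k mod 2 = n mod 2} = n div 2"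
proof (induction n rule: less_induct)
  case (less n)
  show ?case
  proof (cases "n < 2")
    case True
    then show ?thesis by (cases n) auto
  next
    case False
    then obtain m where m: "n = Suc (Suc m)" by (metis add_2_eq_Suc le_Suc_ex not_less)
    then have "{k. k < n \<and> k mod 2 = n mod 2} = insert m {k. k < m \<and> k mod 2 = m mod 2}"
      by (auto simp: less_Suc_eq mod2_eq_if)
    then show ?thesis using less.IH[of m] m by simp
  qed
qed

lemma walk_comb_scale: "walk_comb n A (\<lambda>k. c * y k) i = c * walk_comb n A y i"
  unfolding walk_comb_def by (simp add: sum_distrib_left mult.left_commute)

definition walk_kernel :: "nat \<Rightarrow> (nat \<Rightarrow> nat \<Rightarrow> 'a::comm_ring_1) \<Rightarrow> (nat \<Rightarrow> 'a) \<Rightarrow> bool" where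
  "walk_kernel n A y \<longleftrightarrow> (\<forall>i<n. walk_comb n A y i = 0)"

definition shift_vec :: "(nat \<Rightarrow> 'a::zero) \<Rightarrow> nat \<Rightarrow> 'a" where
  "shift_vec y k = (case k of 0 \<Rightarrow> 0 | Suc j \<Rightarrow> y j)"

lemma walk_comb_shift_vec:
  assumes n: "0 < n" and last: "y (n - 1) = 0" and i: "i < n"
  shows "walk_comb n A (shift_vec y) i = (\<Sum>j<n. A i j * walk_comb n A y j)"
proof -
  obtain m where m: "n = Suc m" using n by (cases n) auto
  have W_y: "walk_comb n A y j = (\<Sum>k<m. walk_vec n A k j * y k)" for j
    unfolding walk_comb_def m using last m by simp
  have "walk_comb n A (shift_vec y) i = (\<Sum>k<m. walk_vec n A (Suc k) i * y k)"
    unfolding walk_comb_def m by (subst sum.lessThan_Suc_shift) (simp add: shift_vec_def)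
  also have "\<dots> = (\<Sum>k<m. \<Sum>j<n. A i j * (walk_vec n A k j * y k))"
    by (simp add: sum_distrib_right mult.assoc)
  also have "\<dots> = (\<Sum>j<n. \<Sum>k<m. A i j * (walk_vec n A k j * y k))"
    by (rule sum.swap)
  also have "\<dots> = (\<Sum>j<n. A i j * walk_comb n A y j)"
    by (simp add: W_y sum_distrib_left)
  finally show ?thesis .
qed

text \<open>A stands for S reduced mod p and \<sigma> for the self-converse permutation; u spans the
  kernel of the walk matrix and j0 indexes a column outside a basis of its column space.\<close>
locale corank_one_walk =
  fixes n :: nat and A :: "nat \<Rightarrow> nat \<Rightarrow> 'a::field" and \<sigma> :: "nat \<Rightarrow> nat"
    and u :: "nat \<Rightarrow> 'a" and j0 :: nat
  assumes skew: "\<And>i j. i < n \<Longrightarrow> j < n \<Longrightarrow> A j i = - A i j"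
    and permutes: "\<sigma> permutes {..<n}"
    and anti: "\<And>i j. i < n \<Longrightarrow> j < n \<Longrightarrow> A (\<sigma> i) (\<sigma> j) = - A i j"
    and involution: "\<And>i. i < n \<Longrightarrow> \<sigma> (\<sigma> i) = i"
    and card_fixpoints: "card {i. i < n \<and> \<sigma> i = i} = n mod 2"
    and two_nonzero: "(2::'a) \<noteq> 0"
    and kernel_u: "walk_kernel n A u"
    and j0: "j0 < n" "u j0 \<noteq> 0"
    and kernel_j0: "\<And>y k. walk_kernel n A y \<Longrightarrow> y j0 = 0 \<Longrightarrow> k < n \<Longrightarrow> y k = 0"
begin

abbreviation \<omega> :: "nat \<Rightarrow> nat \<Rightarrow> 'a" where "\<omega> \<equiv> walk_vec n A"
abbreviation W :: "(nat \<Rightarrow> 'a) \<Rightarrow> nat \<Rightarrow> 'a" where "W \<equiv> walk_comb n A"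
abbreviation \<delta> :: 'a where "\<delta> \<equiv> (-1) ^ n"

definition parity_supported :: "nat \<Rightarrow> (nat \<Rightarrow> 'a) \<Rightarrow> bool" where
  "parity_supported p y \<longleftrightarrow> (\<forall>k<n. k mod 2 \<noteq> p \<longrightarrow> y k = 0)"

definition upper_half :: "nat set" where
  "upper_half = {i. i < n \<and> i < \<sigma> i}"

lemma n_pos: "0 < n"
  using j0 by simp

lemma last_other_parity: "n - 1 < n" "(n - 1) mod 2 \<noteq> n mod 2"
  using n_pos by (cases n; simp add: mod2_eq_if)+

lemma Suc_mod_2_eq_iff: "Suc k mod 2 = n mod 2 \<longleftrightarrow> k mod 2 = (n - 1) mod 2"
  using n_pos by (cases n) (auto simp: mod2_eq_if)

lemma Suc_less_same_parity: "k < n \<Longrightarrow> k mod 2 = n mod 2 \<Longrightarrow> Suc k < n"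
  by (cases "Suc k = n") (auto simp: mod_Suc split: if_splits)

lemma delta_square: "\<delta> * \<delta> = 1"
  by (simp add: power_mult_distrib[symmetric])

lemma double_eq_zero: "(x::'a) + x = 0 \<Longrightarrow> x = 0"
  using two_nonzero by (metis mult_2 mult_eq_0_iff)

lemma \<sigma>_lt: "i < n \<Longrightarrow> \<sigma> i < n"
  using permutes_in_image[OF permutes] by simp

lemma sum_\<sigma>: "(\<Sum>i<n. g (\<sigma> i)) = (\<Sum>i<n. g i)"
  using sum.reindex_bij_betw[OF permutes_imp_bij[OF permutes]] .

lemma walk_vec_\<sigma>: "i < n \<Longrightarrow> \<omega> k (\<sigma> i) = (-1)^k * \<omega> k i"
  by (rule walk_vec_permute[of \<sigma> n A, OF permutes anti])

lemma walk_comb_alternate: "i < n \<Longrightarrow> W (\<lambda>k. (-1)^k * y k) i = W y (\<sigma> i)"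
  unfolding walk_comb_def using walk_vec_\<sigma> by (intro sum.cong) (simp_all add: algebra_simps)

lemma walk_kernel_alternate: "walk_kernel n A y \<Longrightarrow> walk_kernel n A (\<lambda>k. (-1)^k * y k)"
  unfolding walk_kernel_def using walk_comb_alternate \<sigma>_lt by simp

lemma walk_kernel_lincomb:
  "walk_kernel n A y \<Longrightarrow> walk_kernel n A z \<Longrightarrow> walk_kernel n A (\<lambda>k. a * y k + b * z k)"
  unfolding walk_kernel_def walk_comb_def
  by (simp add: algebra_simps sum.distrib sum_distrib_left[symmetric])

lemma walk_kernel_multiple:
  assumes y: "walk_kernel n A y" and k: "k < n"
  shows "y k = (y j0 / u j0) * u k"
proof -
  let ?c = "y j0 / u j0"
  have "walk_kernel n A (\<lambda>k. 1 * y k + (- ?c) * u k)"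
    using walk_kernel_lincomb[OF y kernel_u] .
  moreover have "1 * y j0 + (- ?c) * u j0 = 0" using j0 by simp
  ultimately have "1 * y k + (- ?c) * u k = 0"
    using kernel_j0[of "\<lambda>k. 1 * y k + (- ?c) * u k"] k by blast
  then show ?thesis by (simp only: mult_1 mult_minus_left add_uminus_conv_diff right_minus_eq)
qed

text \<open>Otherwise the shift of u is in the kernel as well; but at the largest index j in the
  support of u it takes the value u j \<noteq> 0, while u (j + 1) = 0.\<close>
lemma kernel_last_nonzero: "u (n - 1) \<noteq> 0"
proof
  assume last: "u (n - 1) = 0"
  have shifted: "walk_kernel n A (shift_vec u)"
    using walk_comb_shift_vec[of n u, OF n_pos last] kernel_u unfolding walk_kernel_def by simp
  define j where "j = Max {k. k < n \<and> u k \<noteq> 0}"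
  have "j \<in> {k. k < n \<and> u k \<noteq> 0}"
    unfolding j_def using j0 by (intro Max_in) auto
  then have j: "j < n" "u j \<noteq> 0" by simp_all
  with last have Suc_j: "Suc j < n" by (cases "Suc j = n") auto
  have "u (Suc j) \<noteq> 0"
    using walk_kernel_multiple[OF shifted Suc_j] j(2) by (auto simp: shift_vec_def)
  then have "Suc j \<le> j"
    using Max_ge[of "{k. k < n \<and> u k \<noteq> 0}" "Suc j"] Suc_j unfolding j_def[symmetric] by simp
  then show False by simp
qed

lemma walk_kernel_last_zero:
  assumes y: "walk_kernel n A y" and last: "y (n - 1) = 0" and k: "k < n"
  shows "y k = 0"
proof -
  have "y j0 / u j0 = 0"
    using walk_kernel_multiple[OF y, of "n - 1"] n_pos last kernel_last_nonzero by simp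
  then show ?thesis using walk_kernel_multiple[OF y k] by (metis mult_zero_left)
qed

text \<open>The alternated vector ((-1)^k u k) is again in the kernel, so it is a multiple of u;
  comparing last entries, the multiple is (-1)^(n-1).\<close>
lemma kernel_parity: "parity_supported ((n - 1) mod 2) u"
  unfolding parity_supported_def
proof (intro allI impI)
  fix k assume k: "k < n" "k mod 2 \<noteq> (n - 1) mod 2"
  let ?c = "(-1)^j0 * u j0 / u j0"
  have alt: "walk_kernel n A (\<lambda>k. (-1)^k * u k)"
    by (rule walk_kernel_alternate[OF kernel_u])
  have "(-1)^(n-1) * u (n-1) = ?c * u (n-1)"
    using walk_kernel_multiple[OF alt, of "n - 1"] n_pos by simp
  then have c: "?c = (-1)^(n-1)" using kernel_last_nonzero by simp
  have "(-1)^k * u k = (-1)^(n-1) * u k" using walk_kernel_multiple[OF alt k(1)] c by simp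
  moreover have "(-1)^k = - ((-1)^(n-1) :: 'a)"
    using minus_one_power_other_parity k(2) by blast
  ultimately have "- ((-1)^(n-1) * u k) = (-1)^(n-1) * u k" by (simp only: mult_minus_left)
  then have "(-1)^(n-1) * u k + (-1)^(n-1) * u k = 0" by (metis add.left_inverse)
  then have "(-1)^(n-1) * u k = 0" by (rule double_eq_zero)
  then show "u k = 0" by simp
qed

lemma card_upper_half: "card upper_half = n div 2"
proof -
  let ?L = "{i. i < n \<and> \<sigma> i < i}"
  let ?F = "{i. i < n \<and> \<sigma> i = i}"
  have "\<sigma> ` upper_half = ?L"
  proof
    show "\<sigma> ` upper_half \<subseteq> ?L"
      unfolding upper_half_def using \<sigma>_lt involution by auto
    show "?L \<subseteq> \<sigma> ` upper_half"
    proof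
      fix i assume "i \<in> ?L"
      then have "\<sigma> i \<in> upper_half" "i = \<sigma> (\<sigma> i)"
        unfolding upper_half_def using \<sigma>_lt involution by auto
      then show "i \<in> \<sigma> ` upper_half" by blast
    qed
  qed
  moreover have "inj_on \<sigma> upper_half"
    by (rule inj_on_subset[OF bij_betw_imp_inj_on[OF permutes_imp_bij[OF permutes]]])
      (auto simp: upper_half_def)
  ultimately have card_L: "card ?L = card upper_half" using card_image by fastforce
  have "{..<n} = upper_half \<union> ?L \<union> ?F" unfolding upper_half_def by auto
  then have "n = card (upper_half \<union> ?L \<union> ?F)" by (metis card_lessThan)
  also have "\<dots> = card (upper_half \<union> ?L) + card ?F"
    by (intro card_Un_disjoint) (auto simp: upper_half_def)
  also have "card (upper_half \<union> ?L) = card upper_half + card ?L"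
    by (intro card_Un_disjoint) (auto simp: upper_half_def)
  finally show ?thesis using card_L card_fixpoints by simp
qed

text \<open>Fixed points of \<sigma> exist only for odd n, where \<delta> = -1.\<close>
lemma eigen_vanishes_from_upper_half:
  assumes eigen: "\<And>i. i < n \<Longrightarrow> x (\<sigma> i) = \<delta> * x i"
    and upper: "\<And>i. i \<in> upper_half \<Longrightarrow> x i = 0" and i: "i < n"
  shows "x i = 0"
proof -
  consider "i < \<sigma> i" | "\<sigma> i < i" | "\<sigma> i = i" by linarith
  then show ?thesis
  proof cases
    case 1
    then show ?thesis using upper i by (simp add: upper_half_def)
  next
    case 2
    then have "x (\<sigma> i) = 0"
      using upper \<sigma>_lt[OF i] involution[OF i] by (simp add: upper_half_def)
    then show ?thesis using eigen[OF \<sigma>_lt[OF i]] involution[OF i] by simp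
  next
    case 3
    then have "{i. i < n \<and> \<sigma> i = i} \<noteq> {}" using i by auto
    then have "card {i. i < n \<and> \<sigma> i = i} \<noteq> 0" by simp
    then have "odd n" using card_fixpoints by presburger
    then have "x i + x i = 0" using eigen[OF i] 3 by simp
    then show ?thesis by (rule double_eq_zero)
  qed
qed

lemma walk_comb_\<sigma>_parity:
  assumes t: "parity_supported (n mod 2) t" and i: "i < n"
  shows "W t (\<sigma> i) = \<delta> * W t i"
proof -
  have "\<omega> k (\<sigma> i) * t k = \<delta> * (\<omega> k i * t k)" if "k < n" for k
  proof (cases "k mod 2 = n mod 2")
    case True
    then have "(-1::'a) ^ k = \<delta>" by (rule minus_one_power_same_parity)
    then show ?thesis using walk_vec_\<sigma>[OF i] by simp
  next
    case False
    then show ?thesis using t that unfolding parity_supported_def by simp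
  qed
  then show ?thesis unfolding walk_comb_def sum_distrib_left by (intro sum.cong) auto
qed

lemma parity_walk_comb_vanishes:
  assumes t: "parity_supported (n mod 2) t" and upper: "\<And>i. i \<in> upper_half \<Longrightarrow> W t i = 0"
    and k: "k < n"
  shows "t k = 0"
proof -
  have "W t i = 0" if "i < n" for i
    by (rule eigen_vanishes_from_upper_half[of "W t", OF walk_comb_\<sigma>_parity[OF t] upper that])
  then have "walk_kernel n A t" unfolding walk_kernel_def by blast
  moreover have "t (n - 1) = 0"
    using t last_other_parity unfolding parity_supported_def by blast
  ultimately show ?thesis by (rule walk_kernel_last_zero[OF _ _ k])
qed

text \<open>A \<delta>-eigenvector of \<sigma> is determined by its values on upper_half, and the n div 2 walk
  vectors of parity n mod 2 restricted to upper_half form an injective square system.\<close>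
lemma eigen_in_walk_span:
  assumes eigen: "\<And>i. i < n \<Longrightarrow> x (\<sigma> i) = \<delta> * x i"
  obtains t where "parity_supported (n mod 2) t" "\<And>i. i < n \<Longrightarrow> x i = W t i"
proof -
  let ?J = "{k. k < n \<and> k mod 2 = n mod 2}"
  define ext where "ext t k = (if k \<in> ?J then t k else 0)" for t :: "nat \<Rightarrow> 'a" and k
  have ext_parity: "parity_supported (n mod 2) (ext t)" for t
    unfolding parity_supported_def ext_def by simp
  have W_ext: "W (ext t) i = (\<Sum>k\<in>?J. \<omega> k i * t k)" for t i
  proof -
    have "W (ext t) i = (\<Sum>k<n. if k \<in> ?J then \<omega> k i * t k else 0)"
      unfolding walk_comb_def ext_def by (intro sum.cong) auto
    also have "\<dots> = (\<Sum>k\<in>{..<n} \<inter> ?J. \<omega> k i * t k)" by (rule sum.inter_restrict[symmetric]) simp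
    also have "{..<n} \<inter> ?J = ?J" by auto
    finally show ?thesis .
  qed
  have "\<exists>t. \<forall>i\<in>upper_half. (\<Sum>k\<in>?J. \<omega> k i * t k) = x i"
  proof (rule square_system_surjective[where M = "\<lambda>i k. \<omega> k i" and b = x])
    show "finite upper_half" by (simp add: upper_half_def)
    show "card upper_half = card ?J" using card_upper_half card_same_parity_below by simp
  next
    fix t assume "\<forall>i\<in>upper_half. (\<Sum>k\<in>?J. \<omega> k i * t k) = 0"
    then have ext_zero: "ext t k = 0" if "k < n" for k
      using parity_walk_comb_vanishes[OF ext_parity _ that] W_ext by simp
    show "\<forall>k\<in>?J. t k = 0"
    proof
      fix k assume "k \<in> ?J"
      then show "t k = 0" using ext_zero[of k] by (simp add: ext_def)
    qed
  qed simp
  then obtain t where t: "\<And>i. i \<in> upper_half \<Longrightarrow> (\<Sum>k\<in>?J. \<omega> k i * t k) = x i" by blast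
  have "x i - W (ext t) i = 0" if "i < n" for i
  proof (rule eigen_vanishes_from_upper_half[OF _ _ that])
    fix j assume "j < n"
    then show "x (\<sigma> j) - W (ext t) (\<sigma> j) = \<delta> * (x j - W (ext t) j)"
      using eigen walk_comb_\<sigma>_parity[OF ext_parity] by (simp add: algebra_simps)
  next
    fix j assume "j \<in> upper_half"
    then show "x j - W (ext t) j = 0" using t W_ext by simp
  qed
  then show thesis using that[OF ext_parity[of t]] by simp
qed

text \<open>W y lies in the \<delta>-eigenspace of \<sigma>, which is spanned by the walk vectors of parity
  n mod 2 and is orthogonal to the (-\<delta>)-eigenspace.\<close>
lemma walk_comb_orthogonal_all:
  assumes y: "parity_supported (n mod 2) y"
    and orth: "\<And>k. k < n \<Longrightarrow> k mod 2 = n mod 2 \<Longrightarrow> (\<Sum>i<n. \<omega> k i * W y i) = 0"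
  shows "(\<Sum>i<n. W y i * z i) = 0"
proof -
  define z' where "z' i = z i + \<delta> * z (\<sigma> i)" for i
  have "z' (\<sigma> i) = \<delta> * z' i" if "i < n" for i
  proof -
    have "z' (\<sigma> i) = \<delta> * z i + (\<delta> * \<delta>) * z (\<sigma> i)"
      unfolding z'_def using involution[OF that] delta_square by simp
    then show ?thesis unfolding z'_def by (simp add: algebra_simps)
  qed
  then obtain t where t: "parity_supported (n mod 2) t" "\<And>i. i < n \<Longrightarrow> z' i = W t i"
    using eigen_in_walk_span by blast
  have "(\<Sum>i<n. W y i * z' i) = (\<Sum>i<n. \<Sum>k<n. W y i * (\<omega> k i * t k))"
    using t(2) unfolding walk_comb_def[of n A t] by (simp add: sum_distrib_left)
  also have "\<dots> = (\<Sum>k<n. t k * (\<Sum>i<n. \<omega> k i * W y i))"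
    by (subst sum.swap) (simp add: sum_distrib_left algebra_simps)
  also have "\<dots> = 0"
    using orth t(1) unfolding parity_supported_def by (intro sum.neutral) auto
  finally have z'_orth: "(\<Sum>i<n. W y i * z' i) = 0" .
  have "(\<Sum>i<n. W y i * z (\<sigma> i)) = (\<Sum>i<n. W y (\<sigma> i) * z (\<sigma> (\<sigma> i)))"
    by (rule sum_\<sigma>[symmetric])
  also have "\<dots> = \<delta> * (\<Sum>i<n. W y i * z i)"
    using walk_comb_\<sigma>_parity[OF y] involution by (simp add: sum_distrib_left mult.assoc)
  finally have \<sigma>_part: "(\<Sum>i<n. W y i * z (\<sigma> i)) = \<delta> * (\<Sum>i<n. W y i * z i)" .
  have "(\<Sum>i<n. W y i * z' i) = (\<Sum>i<n. W y i * z i) + \<delta> * (\<Sum>i<n. W y i * z (\<sigma> i))"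
    unfolding z'_def by (simp add: distrib_left sum.distrib sum_distrib_left mult.left_commute)
  also have "\<dots> = (\<Sum>i<n. W y i * z i) + (\<Sum>i<n. W y i * z i)"
    unfolding \<sigma>_part by (simp only: mult.assoc[symmetric] delta_square mult_1)
  finally have "(\<Sum>i<n. W y i * z i) + (\<Sum>i<n. W y i * z i) = 0" using z'_orth by simp
  then show ?thesis by (rule double_eq_zero)
qed

lemma walk_comb_orthogonal_same_parity:
  assumes y: "parity_supported (n mod 2) y"
    and orth: "\<And>k. k < n \<Longrightarrow> k mod 2 = n mod 2 \<Longrightarrow> (\<Sum>i<n. \<omega> k i * W y i) = 0"
    and i: "i < n"
  shows "W y i = 0"
  using walk_comb_orthogonal_all[OF y orth, of "\<lambda>j. if j = i then 1 else 0"] i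
  by (simp add: if_distrib sum.delta cong: if_cong)

lemma walk_vec_skew_transfer:
  "(\<Sum>i<n. \<omega> k i * (\<Sum>j<n. A i j * v j)) = - (\<Sum>j<n. \<omega> (Suc k) j * v j)"
proof -
  have "(\<Sum>i<n. \<omega> k i * (\<Sum>j<n. A i j * v j)) = (\<Sum>i<n. \<Sum>j<n. \<omega> k i * (A i j * v j))"
    by (simp add: sum_distrib_left)
  also have "\<dots> = (\<Sum>j<n. \<Sum>i<n. \<omega> k i * (A i j * v j))"
    by (rule sum.swap)
  also have "\<dots> = (\<Sum>j<n. (\<Sum>i<n. A i j * \<omega> k i) * v j)"
    unfolding sum_distrib_right by (intro sum.cong refl) (simp add: mult_ac)
  also have "\<dots> = (\<Sum>j<n. (- \<omega> (Suc k) j) * v j)"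
  proof (intro sum.cong refl)
    fix j assume j: "j \<in> {..<n}"
    have "(\<Sum>i<n. A i j * \<omega> k i) = (\<Sum>i<n. - (A j i * \<omega> k i))"
    proof (intro sum.cong refl)
      fix i assume "i \<in> {..<n}"
      then show "A i j * \<omega> k i = - (A j i * \<omega> k i)" using skew[of j i] j by simp
    qed
    then show "(\<Sum>i<n. A i j * \<omega> k i) * v j = (- \<omega> (Suc k) j) * v j"
      by (simp add: sum_negf)
  qed
  finally show ?thesis by (simp add: sum_negf)
qed

text \<open>The shift multiplies W z by A and moves the support of z to parity n mod 2, where
  orthogonality to the walk vectors forces W (shift z) = 0.\<close>
lemma parity_orthogonal_vanishes:
  assumes z: "parity_supported ((n - 1) mod 2) z" and last: "z (n - 1) = 0"
    and orth: "\<And>k. k < n \<Longrightarrow> (\<Sum>i<n. \<omega> k i * W z i) = 0" and k: "k < n"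
  shows "z k = 0"
proof -
  define y where "y = shift_vec z"
  have W_y: "W y j = (\<Sum>l<n. A j l * W z l)" if "j < n" for j
    unfolding y_def by (rule walk_comb_shift_vec[of n z, OF n_pos last that])
  have y_parity: "parity_supported (n mod 2) y"
    using z unfolding parity_supported_def y_def shift_vec_def
    by (auto split: nat.split simp: Suc_mod_2_eq_iff)
  have "(\<Sum>i<n. \<omega> k i * W y i) = 0" if "k < n" "k mod 2 = n mod 2" for k
  proof -
    have "(\<Sum>i<n. \<omega> k i * W y i) = - (\<Sum>l<n. \<omega> (Suc k) l * W z l)"
      using W_y walk_vec_skew_transfer by simp
    also have "\<dots> = 0" using orth[OF Suc_less_same_parity[OF that]] by simp
    finally show ?thesis .
  qed
  then have "W y j = 0" if "j < n" for j
    using walk_comb_orthogonal_same_parity[OF y_parity] that by blast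
  then have y_kernel: "walk_kernel n A y" unfolding walk_kernel_def by blast
  have y_last: "y (n - 1) = 0"
    using y_parity last_other_parity unfolding parity_supported_def by blast
  show ?thesis
  proof (cases "Suc k < n")
    case True
    then show ?thesis
      using walk_kernel_last_zero[OF y_kernel y_last True] by (simp add: y_def shift_vec_def)
  next
    case False
    then have "k = n - 1" using k by simp
    then show ?thesis using last by simp
  qed
qed

text \<open>Subtracting a multiple of u clears the last coefficient of x.\<close>
lemma walk_comb_orthogonal_other_parity:
  assumes x: "parity_supported ((n - 1) mod 2) x"
    and orth: "\<And>k. k < n \<Longrightarrow> (\<Sum>i<n. \<omega> k i * W x i) = 0" and i: "i < n"
  shows "W x i = 0"
proof -
  define z where "z k = x (n - 1) * u k - u (n - 1) * x k" for k
  have W_z: "W z j = - u (n - 1) * W x j" if "j < n" for j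
  proof -
    have "W z j = x (n - 1) * W u j - u (n - 1) * W x j"
      unfolding walk_comb_def z_def by (simp add: algebra_simps sum_subtractf sum_distrib_left)
    then show ?thesis using kernel_u that unfolding walk_kernel_def by simp
  qed
  have "z k = 0" if "k < n" for k
  proof (rule parity_orthogonal_vanishes[OF _ _ _ that])
    show "parity_supported ((n - 1) mod 2) z"
      using x kernel_parity unfolding parity_supported_def z_def by simp
    show "z (n - 1) = 0" unfolding z_def by simp
    show "(\<Sum>i<n. \<omega> k i * W z i) = 0" if "k < n" for k
    proof -
      have "(\<Sum>i<n. \<omega> k i * W z i) = (\<Sum>i<n. - u (n - 1) * (\<omega> k i * W x i))"
        using W_z by (intro sum.cong) (simp_all add: mult.left_commute)
      also have "\<dots> = - u (n - 1) * (\<Sum>i<n. \<omega> k i * W x i)" by (rule sum_distrib_left[symmetric])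
      also have "\<dots> = 0" using orth[OF that] by simp
      finally show ?thesis .
    qed
  qed
  then have "W z i = 0" unfolding walk_comb_def by simp
  then show ?thesis using W_z[OF i] kernel_last_nonzero by simp
qed

lemma walk_comb_orthogonal:
  assumes x: "parity_supported p x" and p: "p < 2"
    and orth: "\<And>k. k < n \<Longrightarrow> (\<Sum>i<n. \<omega> k i * W x i) = 0" and i: "i < n"
  shows "W x i = 0"
proof -
  have "p = n mod 2 \<or> p = (n - 1) mod 2"
    using p last_other_parity(2) mod_less_divisor[of 2 n] mod_less_divisor[of 2 "n - 1"] by linarith
  then show ?thesis
    using walk_comb_orthogonal_same_parity[OF _ _ i] walk_comb_orthogonal_other_parity[OF _ orth i]
      x orth by blast
qed

lemma isotropic_orthogonal_replaced_column_singular: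
  assumes orth: "\<And>k. k < n \<Longrightarrow> (\<Sum>i<n. \<omega> k i * v i) = 0"
    and iso: "(\<Sum>i<n. v i * v i) = 0" and i1: "i1 < n" "v i1 \<noteq> 0"
  obtains t where "t \<in> carrier_vec n" "t \<noteq> 0\<^sub>v n"
    "mat n n (\<lambda>(i,k). if k = j0 then v i else \<omega> k i) *\<^sub>v t = 0\<^sub>v n"
proof -
  define N where "N = mat n n (\<lambda>(i,k). if k = j0 then v i else \<omega> k i)"
  have N: "N \<in> carrier_mat n n" and NT: "transpose_mat N \<in> carrier_mat n n"
    unfolding N_def by simp_all
  have "transpose_mat N *\<^sub>v vec n v = 0\<^sub>v n"
  proof (rule eq_vecI)
    fix k assume "k < dim_vec (0\<^sub>v n :: 'a vec)"
    then have k: "k < n" by simp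
    have "(transpose_mat N *\<^sub>v vec n v) $ k = (\<Sum>i<n. transpose_mat N $$ (k,i) * vec n v $ i)"
      by (rule index_mult_mat_vec_sum[OF NT vec_carrier k])
    also have "\<dots> = (\<Sum>i<n. (if k = j0 then v i else \<omega> k i) * v i)"
      unfolding N_def using k by (intro sum.cong) auto
    also have "\<dots> = 0" using iso orth[OF k] by (cases "k = j0") (auto simp: mult.commute)
    finally show "(transpose_mat N *\<^sub>v vec n v) $ k = 0\<^sub>v n $ k" using k by simp
  qed (simp add: N_def)
  moreover have "vec n v \<noteq> 0\<^sub>v n"
    using i1 by (metis index_vec index_zero_vec(1))
  ultimately have "det (transpose_mat N) = 0"
    using det_0_iff_vec_prod_zero_field[OF NT] vec_carrier[of n v] by blast
  then have "det N = 0" using det_transpose[OF N] by simp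
  then show thesis using det_0_iff_vec_prod_zero_field[OF N] that unfolding N_def by blast
qed

text \<open>Replacing column j0 of the walk matrix by v gives a singular matrix; a kernel vector
  of it cannot vanish at j0, since the other columns are linearly independent.\<close>
lemma isotropic_orthogonal_column_relation:
  assumes orth: "\<And>k. k < n \<Longrightarrow> (\<Sum>i<n. \<omega> k i * v i) = 0"
    and iso: "(\<Sum>i<n. v i * v i) = 0" and i1: "i1 < n" "v i1 \<noteq> 0"
  obtains t where "t j0 \<noteq> 0" "\<And>i. i < n \<Longrightarrow> v i * t j0 + W (\<lambda>k. if k = j0 then 0 else t k) i = 0"
proof -
  define N where "N = mat n n (\<lambda>(i,k). if k = j0 then v i else \<omega> k i)"
  have N: "N \<in> carrier_mat n n" unfolding N_def by simp
  obtain t where t: "t \<in> carrier_vec n" "t \<noteq> 0\<^sub>v n" "N *\<^sub>v t = 0\<^sub>v n"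
    using isotropic_orthogonal_replaced_column_singular[OF orth iso i1] unfolding N_def by blast
  define t' where "t' k = (if k = j0 then 0 else t $ k)" for k
  have relation: "v i * t $ j0 + W t' i = 0" if "i < n" for i
  proof -
    have "(\<Sum>k<n. N $$ (i,k) * t $ k) = (\<Sum>k<n. (if k = j0 then v i * t $ k else 0) + \<omega> k i * t' k)"
      unfolding N_def t'_def using that by (intro sum.cong) auto
    then have "v i * t $ j0 + W t' i = (\<Sum>k<n. N $$ (i,k) * t $ k)"
      unfolding sum.distrib walk_comb_def using j0(1) by simp
    also have "\<dots> = (N *\<^sub>v t) $ i"
      by (rule index_mult_mat_vec_sum[OF N t(1) that, symmetric])
    finally show ?thesis using t(3) that by simp
  qed
  have "t $ j0 \<noteq> 0"
  proof
    assume t_j0: "t $ j0 = 0"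
    then have "t' = (\<lambda>k. t $ k)" unfolding t'_def by auto
    then have "walk_kernel n A (\<lambda>k. t $ k)"
      unfolding walk_kernel_def using relation t_j0 by simp
    then have "t $ k = 0" if "k < n" for k
      using kernel_j0[of "\<lambda>k. t $ k"] t_j0 that by blast
    then have "t = 0\<^sub>v n" using t(1) by (intro eq_vecI) auto
    with t(2) show False ..
  qed
  with relation show thesis unfolding t'_def by (intro that[of "\<lambda>k. t $ k"])
qed

lemma isotropic_orthogonal_in_walk_span:
  assumes orth: "\<And>k. k < n \<Longrightarrow> (\<Sum>i<n. \<omega> k i * v i) = 0"
    and iso: "(\<Sum>i<n. v i * v i) = 0" and i1: "i1 < n" "v i1 \<noteq> 0"
  obtains x where "\<And>i. i < n \<Longrightarrow> v i = W x i"
proof -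
  obtain t where t: "t j0 \<noteq> 0"
    and relation: "\<And>i. i < n \<Longrightarrow> v i * t j0 + W (\<lambda>k. if k = j0 then 0 else t k) i = 0"
    using isotropic_orthogonal_column_relation[OF orth iso i1] by blast
  have "v i = W (\<lambda>k. (- 1 / t j0) * (if k = j0 then 0 else t k)) i" if "i < n" for i
    unfolding walk_comb_scale using relation[OF that] t by (simp add: field_simps eq_neg_iff_add_eq_0)
  then show thesis by (rule that)
qed

text \<open>Write v = W x; the even and odd parts of x give v + v \<circ> \<sigma> and v - v \<circ> \<sigma>,
  both orthogonal to all walk vectors and hence zero.\<close>
lemma isotropic_orthogonal_vanishes:
  assumes orth: "\<And>k. k < n \<Longrightarrow> (\<Sum>i<n. \<omega> k i * v i) = 0"
    and iso: "(\<Sum>i<n. v i * v i) = 0" and i: "i < n"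
  shows "v i = 0"
proof (rule ccontr)
  assume nz: "v i \<noteq> 0"
  obtain x where x: "\<And>i. i < n \<Longrightarrow> v i = W x i"
    using isotropic_orthogonal_in_walk_span[OF orth iso i nz] by blast
  have orth_\<sigma>: "(\<Sum>i<n. \<omega> k i * v (\<sigma> i)) = 0" if k: "k < n" for k
  proof -
    have "(\<Sum>i<n. \<omega> k i * v (\<sigma> i)) = (-1)^k * (\<Sum>i<n. \<omega> k (\<sigma> i) * v (\<sigma> i))"
      using walk_vec_\<sigma> by (simp add: sum_distrib_left mult.assoc[symmetric] power_mult_distrib[symmetric])
    also have "\<dots> = 0" using sum_\<sigma>[of "\<lambda>i. \<omega> k i * v i"] orth[OF k] by simp
    finally show ?thesis .
  qed
  define x_even where "x_even k = x k + (-1)^k * x k" for k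
  define x_odd where "x_odd k = x k - (-1)^k * x k" for k
  have W_even: "W x_even j = v j + v (\<sigma> j)" and W_odd: "W x_odd j = v j - v (\<sigma> j)"
    if "j < n" for j
    using walk_comb_alternate[OF that, of x] x that \<sigma>_lt
    unfolding x_even_def x_odd_def walk_comb_def
    by (simp_all add: algebra_simps sum.distrib sum_subtractf)
  have "parity_supported 0 x_even"
    unfolding parity_supported_def x_even_def using minus_one_power_other_parity[of _ 0, where 'a='a] by auto
  then have "v i + v (\<sigma> i) = 0"
    using walk_comb_orthogonal[of 0 x_even, OF _ _ _ i] W_even orth orth_\<sigma> i
    by (simp add: distrib_left sum.distrib)
  moreover have "parity_supported 1 x_odd"
    unfolding parity_supported_def x_odd_def using minus_one_power_same_parity[of _ 0, where 'a='a] by auto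
  then have "v i - v (\<sigma> i) = 0"
    using walk_comb_orthogonal[of 1 x_odd, OF _ _ _ i] W_odd orth orth_\<sigma> i
    by (simp add: right_diff_distrib sum_subtractf)
  ultimately have "v i + v i = 0" by (simp add: algebra_simps)
  with nz double_eq_zero show False by blast
qed

end

section \<open>Reduction modulo p\<close>

lemma mod_p_walk_matrix_index:
  assumes "S \<in> carrier_mat n n" "i < n" "k < n"
  shows "(mod_p_mat (walk_matrix n S) :: 'p::prime_card mod_ring mat) $$ (i,k)
    = walk_vec n (\<lambda>i j. of_int (S $$ (i,j))) k i"
  using assms walk_matrix_carrier[of n S]
  by (simp add: mod_p_mat_def walk_matrix_index of_int_walk_vec)

lemma mod_p_walk_matrix_mult_vec:
  assumes S: "S \<in> carrier_mat n n" and i: "i < n"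
  shows "(mod_p_mat (walk_matrix n S) *\<^sub>v vec n y) $ i
    = walk_comb n (\<lambda>i j. of_int (S $$ (i,j)) :: 'p::prime_card mod_ring) y i"
proof -
  have "(mod_p_mat (walk_matrix n S) :: 'p mod_ring mat) \<in> carrier_mat n n"
    using walk_matrix_carrier by (simp add: mod_p_mat_def)
  then have "(mod_p_mat (walk_matrix n S) *\<^sub>v vec n y) $ i
      = (\<Sum>k<n. mod_p_mat (walk_matrix n S) $$ (i,k) * vec n y $ k)"
    by (rule index_mult_mat_vec_sum[OF _ vec_carrier i])
  also have "\<dots> = walk_comb n (\<lambda>i j. of_int (S $$ (i,j))) y i"
    unfolding walk_comb_def using mod_p_walk_matrix_index[OF S i] by (intro sum.cong) auto
  finally show ?thesis .
qed

lemma walk_kernel_mod_p_iff: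
  assumes S: "S \<in> carrier_mat n n"
  shows "walk_kernel n (\<lambda>i j. of_int (S $$ (i,j)) :: 'p::prime_card mod_ring) y
    \<longleftrightarrow> (mod_p_mat (walk_matrix n S) :: 'p mod_ring mat) *\<^sub>v vec n y = 0\<^sub>v n"
    (is "walk_kernel n ?A y \<longleftrightarrow> ?W *\<^sub>v vec n y = 0\<^sub>v n")
proof
  have W: "?W \<in> carrier_mat n n" using walk_matrix_carrier by (simp add: mod_p_mat_def)
  assume "walk_kernel n ?A y"
  then show "?W *\<^sub>v vec n y = 0\<^sub>v n"
    using W mod_p_walk_matrix_mult_vec[OF S, where 'p = 'p]
    by (intro eq_vecI) (simp_all add: walk_kernel_def del: index_mult_mat_vec)
next
  assume W_y: "?W *\<^sub>v vec n y = 0\<^sub>v n"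
  show "walk_kernel n ?A y"
    unfolding walk_kernel_def
  proof (intro allI impI)
    fix i assume "i < n"
    then show "walk_comb n ?A y i = 0"
      using mod_p_walk_matrix_mult_vec[OF S \<open>i < n\<close>, of y] W_y by (simp del: index_mult_mat_vec)
  qed
qed

lemma mod_p_walk_matrix_transpose_mult_vec:
  assumes S: "S \<in> carrier_mat n n" and v: "v \<in> carrier_vec n" and k: "k < n"
  shows "(transpose_mat (mod_p_mat (walk_matrix n S)) *\<^sub>v v) $ k
    = (\<Sum>i<n. walk_vec n (\<lambda>i j. of_int (S $$ (i,j)) :: 'p::prime_card mod_ring) k i * v $ i)"
proof -
  have W: "(mod_p_mat (walk_matrix n S) :: 'p mod_ring mat) \<in> carrier_mat n n"
    using walk_matrix_carrier by (simp add: mod_p_mat_def)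
  have "(transpose_mat (mod_p_mat (walk_matrix n S)) *\<^sub>v v) $ k
      = (\<Sum>i<n. transpose_mat (mod_p_mat (walk_matrix n S)) $$ (k,i) * v $ i)"
    by (rule index_mult_mat_vec_sum[OF _ v k]) (use W in simp)
  also have "\<dots> = (\<Sum>i<n. walk_vec n (\<lambda>i j. of_int (S $$ (i,j))) k i * v $ i)"
    using mod_p_walk_matrix_index[OF S _ k] k W by (intro sum.cong) auto
  finally show ?thesis .
qed

lemma two_nonzero_mod_ring:
  assumes "CARD('p::prime_card) \<noteq> 2"
  shows "(2::'p mod_ring) \<noteq> 0"
proof
  assume "(2::'p mod_ring) = 0"
  then have "of_nat 2 = (0::'p mod_ring)" by simp
  then have "CARD('p) dvd 2" by (rule of_nat_0_mod_ring_dvd)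
  then have "CARD('p) \<le> 2" by (rule dvd_imp_le) simp
  with assms prime_gt_1_nat[OF prime_card[where 'a = 'p]] show False by simp
qed

lemma self_converse_corank_one_walk:
  fixes S :: "int mat"
  assumes skew: "skew_adjacency_matrix n S" and sc: "self_converse n S"
    and det: "det (walk_matrix n S) \<noteq> 0" and p: "CARD('p::prime_card) \<noteq> 2"
    and rank: "vec_space.rank n (mod_p_mat (walk_matrix n S) :: 'p mod_ring mat) = n - 1"
    and n: "0 < n"
  obtains \<sigma> u j0 where "corank_one_walk n (\<lambda>i j. of_int (S $$ (i,j)) :: 'p mod_ring) \<sigma> u j0"
proof -
  let ?A = "\<lambda>i j. of_int (S $$ (i,j)) :: 'p mod_ring"
  let ?W = "mod_p_mat (walk_matrix n S) :: 'p mod_ring mat"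
  have S: "S \<in> carrier_mat n n" using skew unfolding skew_adjacency_matrix_def by simp
  have W: "?W \<in> carrier_mat n n" using walk_matrix_carrier by (simp add: mod_p_mat_def)
  obtain \<sigma> where \<sigma>: "\<sigma> permutes {..<n}"
    and anti: "\<And>i j. i < n \<Longrightarrow> j < n \<Longrightarrow> S $$ (\<sigma> i, \<sigma> j) = - S $$ (i,j)"
    using self_converse_permutation[OF skew sc] by blast
  note kernel_iff = walk_kernel_mod_p_iff[OF S, where 'p = 'p]
  obtain j0 where j0: "j0 < n"
    and kernel_j0: "\<And>y. y \<in> carrier_vec n \<Longrightarrow> ?W *\<^sub>v y = 0\<^sub>v n \<Longrightarrow> y $ j0 = 0 \<Longrightarrow> y = 0\<^sub>v n"
    using vec_space.corank_one_kernel_coordinate[OF W rank n] by blast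
  have "n - 1 \<noteq> n" using n by simp
  then have "det ?W = 0" using vec_space.det_rank_iff[OF W] rank by simp
  then obtain u where u: "u \<in> carrier_vec n" "u \<noteq> 0\<^sub>v n" "?W *\<^sub>v u = 0\<^sub>v n"
    using det_0_iff_vec_prod_zero_field[OF W] by blast
  have "corank_one_walk n ?A \<sigma> (\<lambda>k. u $ k) j0"
  proof
    show "?A j i = - ?A i j" if "i < n" "j < n" for i j
      using skew_adjacency_matrix_skew[OF skew that] by simp
    show "?A (\<sigma> i) (\<sigma> j) = - ?A i j" if "i < n" "j < n" for i j
      using anti[OF that] by simp
    show "\<sigma> (\<sigma> i) = i" if "i < n" for i
      by (rule self_converse_involution[OF S \<sigma> anti det that])
    show "card {i. i < n \<and> \<sigma> i = i} = n mod 2"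
      by (rule self_converse_card_fixpoints[OF S \<sigma> anti det])
    have "vec n (\<lambda>k. u $ k) = u" using u(1) by (intro eq_vecI) auto
    then show "walk_kernel n ?A (\<lambda>k. u $ k)" using kernel_iff u(3) by simp
    show "u $ j0 \<noteq> 0" using kernel_j0[OF u(1,3)] u(2) by blast
    show "y k = 0" if "walk_kernel n ?A y" "y j0 = 0" "k < n" for y k
    proof -
      have "vec n y = 0\<^sub>v n" using kernel_j0[of "vec n y"] kernel_iff[of y] that(1,2) j0 by simp
      then have "vec n y $ k = 0\<^sub>v n $ k" by simp
      then show ?thesis using that(3) by simp
    qed
  qed (use \<sigma> two_nonzero_mod_ring[OF p] j0 in auto)
  then show thesis by (rule that)
qed

theorem theorem1p8:
  fixes n :: nat and S :: "int mat"
  assumes "skew_adjacency_matrix n S"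
    and "self_converse n S"
    and "det (walk_matrix n S) \<noteq> 0"
    and "CARD('p::prime_card) \<noteq> 2"
    and "vec_space.rank n (mod_p_mat (walk_matrix n S) :: 'p mod_ring mat) = n - 1"
  shows "\<forall>v :: 'p mod_ring vec. v \<in> carrier_vec n \<longrightarrow> v \<noteq> 0\<^sub>v n \<longrightarrow>
           transpose_mat (mod_p_mat (walk_matrix n S)) *\<^sub>v v = 0\<^sub>v n \<longrightarrow> v \<bullet> v \<noteq> 0"
proof (intro allI impI notI)
  fix v :: "'p mod_ring vec"
  assume v: "v \<in> carrier_vec n" "v \<noteq> 0\<^sub>v n"
    and ker: "transpose_mat (mod_p_mat (walk_matrix n S)) *\<^sub>v v = 0\<^sub>v n" and iso: "v \<bullet> v = 0"
  have S: "S \<in> carrier_mat n n" using assms(1) unfolding skew_adjacency_matrix_def by simp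
  have "0 < n" using v eq_vecI[of v "0\<^sub>v n"] by (cases n) auto
  then obtain \<sigma> u j0 where walk: "corank_one_walk n (\<lambda>i j. of_int (S $$ (i,j)) :: 'p mod_ring) \<sigma> u j0"
    using self_converse_corank_one_walk[OF assms] by blast
  have "v $ i = 0" if "i < n" for i
  proof (rule corank_one_walk.isotropic_orthogonal_vanishes[OF walk _ _ that])
    show "(\<Sum>i<n. walk_vec n (\<lambda>i j. of_int (S $$ (i,j))) k i * v $ i) = 0" if "k < n" for k
      using mod_p_walk_matrix_transpose_mult_vec[OF S v(1) that] ker that by simp
    show "(\<Sum>i<n. v $ i * v $ i) = 0"
      using iso v(1) by (simp add: scalar_prod_def atLeast0LessThan)
  qed
  then have "v = 0\<^sub>v n" using v(1) by (intro eq_vecI) auto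
  with v(2) show False ..
qed

end
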